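(* For a no-slip billiard system in a general billiard domain $\mathcal{B}\subset\mathbb{R}^n$ (not necessarily a cylinder), if the pre-collision state $(a,u,U)$ at a regular boundary point $a$ satisfies the rolling impact condition, then the post-collision state is given by $$C_a(u,U)=\big(u-2(u\cdot\nu_a)\nu_a,\ U\big),$$ i.e. the center-of-mass velocity is reflected specularly and the angular velocity matrix is unchanged.
   Context: The particle is a ball of radius $r>0$ with rotationally symmetric mass distribution of total mass $m$ and second-moment matrix per unit mass $\lambda I$, $\lambda=(r\gamma)^2/2$, $\gamma>0$; $c=\frac{1-\gamma^2}{1+\gamma^2}$, $s=\frac{2\gamma}{1+\gamma^2}$; for $a,b\in\mathbb{R}^n$, $a\wedge b\in\mathfrak{so}(n)$ is $(a\wedge b)x=(a\cdot x)b-(b\cdot x)a$. $\mathcal{B}$ is the set of admissible centers, $\nu_a$ the unit normal at $a\in\partial\mathcal{B}$ pointing into $\mathcal{B}$. A state is $(a,u,U)$, $u$ the center-of-mass velocity, $U\in\mathfrak{so}(n)$ the angular velocity matrix. The no-slip collision map is $C_a(u,U)=\big(cu-\tfrac{s}{\gamma}(u\cdot\nu_a)\nu_a+s\gamma rU\nu_a,\ \tfrac{s}{\gamma r}\nu_a\wedge u+U-\tfrac{s}{\gamma}\nu_a\wedge U\nu_a\big)$. The pre-collision state $(a,u,U)$ satisfies the rolling impact condition if the orthogonal projection of $v=u-rU\nu_a$ onto $T_a\partial\mathcal{B}$ is zero. *)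

theory Defs
  imports "HOL-Analysis.Analysis"
begin

text \<open>Vectors in R^n are \<open>real^'n\<close>; elements of so(n) are matrices \<open>real^'n^'n\<close>
  acting by \<open>*v\<close>, skew-symmetric: \<open>transpose U = - U\<close>.\<close>

definition skew :: "real^'n^'n \<Rightarrow> bool" where
  "skew U \<longleftrightarrow> transpose U = - U"

text \<open>\<open>(a \<wedge> b) x = (a \<bullet> x) b - (b \<bullet> x) a\<close>, as a matrix.\<close>
definition wedge :: "real^'n \<Rightarrow> real^'n \<Rightarrow> real^'n^'n" where
  "wedge a b = (\<chi> i j. a $ j * b $ i - b $ j * a $ i)"

definition cc :: "real \<Rightarrow> real" where
  "cc \<gamma> = (1 - \<gamma>\<^sup>2) / (1 + \<gamma>\<^sup>2)"

definition ss :: "real \<Rightarrow> real" where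
  "ss \<gamma> = 2 * \<gamma> / (1 + \<gamma>\<^sup>2)"

text \<open>No-slip collision map at a boundary point with inward unit normal \<open>\<nu>\<close>.\<close>
definition collision ::
  "real \<Rightarrow> real \<Rightarrow> real^'n \<Rightarrow> real^'n \<Rightarrow> real^'n^'n \<Rightarrow> (real^'n) \<times> (real^'n^'n)" where
  "collision r \<gamma> \<nu> u U =
     (cc \<gamma> *\<^sub>R u - (ss \<gamma> / \<gamma> * (u \<bullet> \<nu>)) *\<^sub>R \<nu> + (ss \<gamma> * \<gamma> * r) *\<^sub>R (U *v \<nu>),
      (ss \<gamma> / (\<gamma> * r)) *\<^sub>R wedge \<nu> u + U - (ss \<gamma> / \<gamma>) *\<^sub>R wedge \<nu> (U *v \<nu>))"

text \<open>Orthogonal projection onto the tangent space is \<open>closest_point\<close>. Tangent space to the boundary at a regular point with unit normal \<open>\<nu>\<close>.\<close>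
definition tangent_space :: "real^'n \<Rightarrow> (real^'n) set" where
  "tangent_space \<nu> = {x. x \<bullet> \<nu> = 0}"

definition rolling_impact :: "real \<Rightarrow> real^'n \<Rightarrow> real^'n \<Rightarrow> real^'n^'n \<Rightarrow> bool" where
  "rolling_impact r \<nu> u U \<longleftrightarrow> closest_point (tangent_space \<nu>) (u - r *\<^sub>R (U *v \<nu>)) = 0"

end

theory Submission
  imports Defs
begin

text \<open>Under the rolling impact condition the contact-point velocity \<open>u - r U \<nu>\<close> is normal to the
  boundary, so \<open>u = (u \<bullet> \<nu>) \<nu> + r U \<nu>\<close>, and \<open>U \<nu> \<perp> \<nu>\<close> since \<open>U\<close> is skew. Substituting,
  the normal part of \<open>u\<close> is multiplied by \<open>c - s/\<gamma> = -1\<close>, the tangential part \<open>r U \<nu>\<close> by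
  \<open>c + s\<gamma> = 1\<close>, and the two wedge terms of the angular update cancel because \<open>\<nu> \<wedge> \<nu> = 0\<close>.
  Only the unit normal at \<open>a\<close> enters.\<close>

lemma skew_mult_vec_orthogonal:
  assumes "skew U"
  shows "(U *v x) \<bullet> x = 0"
proof -
  have "transpose U *v x = - (U *v x)"
    using assms unfolding skew_def by (simp add: vec_eq_iff matrix_vector_mult_def sum_negf)
  then have "(x v* U) \<bullet> x = - ((U *v x) \<bullet> x)"
    by simp
  then show ?thesis
    by (simp add: dot_lmul_matrix inner_commute [of "U *v x"])
qed

lemma closest_point_tangent_space:
  assumes "norm \<nu> = 1"
  shows "closest_point (tangent_space \<nu>) x = x - (x \<bullet> \<nu>) *\<^sub>R \<nu>"
proof (rule closest_point_unique [symmetric])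
  have hyperplane: "tangent_space \<nu> = {y. \<nu> \<bullet> y = 0}"
    by (simp add: tangent_space_def inner_commute)
  show "convex (tangent_space \<nu>)" "closed (tangent_space \<nu>)"
    unfolding hyperplane by (rule convex_hyperplane closed_hyperplane)+
  have \<nu>\<nu>: "\<nu> \<bullet> \<nu> = 1"
    using assms by (simp add: dot_square_norm)
  then show "x - (x \<bullet> \<nu>) *\<^sub>R \<nu> \<in> tangent_space \<nu>"
    by (simp add: tangent_space_def inner_diff_left)
  show "\<forall>y\<in>tangent_space \<nu>. dist x (x - (x \<bullet> \<nu>) *\<^sub>R \<nu>) \<le> dist x y"
  proof
    fix y assume "y \<in> tangent_space \<nu>"
    then have "(x - y) \<bullet> \<nu> = x \<bullet> \<nu>"
      by (simp add: tangent_space_def inner_diff_left)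
    then have "(norm (x - y))\<^sup>2 = (x \<bullet> \<nu>)\<^sup>2 + (norm (x - y - (x \<bullet> \<nu>) *\<^sub>R \<nu>))\<^sup>2"
      unfolding power2_norm_eq_inner
      by (simp add: inner_diff_left inner_diff_right \<nu>\<nu> inner_commute power2_eq_square)
    then have "\<bar>x \<bullet> \<nu>\<bar> \<le> norm (x - y)"
      by (metis abs_le_square_iff abs_norm_cancel le_add_same_cancel1 zero_le_power2)
    then show "dist x (x - (x \<bullet> \<nu>) *\<^sub>R \<nu>) \<le> dist x y"
      by (simp add: dist_norm assms)
  qed
qed

lemma rolling_impact_iff:
  assumes "norm \<nu> = 1"
  shows "rolling_impact r \<nu> u U \<longleftrightarrow>
    u - r *\<^sub>R (U *v \<nu>) = ((u - r *\<^sub>R (U *v \<nu>)) \<bullet> \<nu>) *\<^sub>R \<nu>"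
  by (simp add: rolling_impact_def closest_point_tangent_space [OF assms])

lemma rolling_impact_decomposition:
  assumes "norm \<nu> = 1" and "skew U" and "rolling_impact r \<nu> u U"
  shows "u = (u \<bullet> \<nu>) *\<^sub>R \<nu> + r *\<^sub>R (U *v \<nu>)"
proof -
  have "(u - r *\<^sub>R (U *v \<nu>)) \<bullet> \<nu> = u \<bullet> \<nu>"
    using skew_mult_vec_orthogonal [OF assms(2)] by (simp add: inner_diff_left)
  then show ?thesis
    using assms(3) unfolding rolling_impact_iff [OF assms(1)] by (metis diff_add_cancel)
qed

lemma wedge_self: "wedge a a = 0"
  by (simp add: wedge_def vec_eq_iff mult.commute)

lemma wedge_add_right: "wedge a (b + c) = wedge a b + wedge a c"
  by (simp add: wedge_def vec_eq_iff algebra_simps)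

lemma wedge_scaleR_right: "wedge a (t *\<^sub>R b) = t *\<^sub>R wedge a b"
  by (simp add: wedge_def vec_eq_iff algebra_simps)

lemma cc_plus_ss_mult: "cc \<gamma> + ss \<gamma> * \<gamma> = 1"
proof -
  have "1 + \<gamma>\<^sup>2 \<noteq> 0"
    by (smt (verit) zero_le_power2)
  then show ?thesis
    by (simp add: cc_def ss_def divide_simps power2_eq_square)
qed

lemma cc_minus_ss_divide:
  assumes "\<gamma> \<noteq> 0"
  shows "cc \<gamma> - ss \<gamma> / \<gamma> = -1"
proof -
  have "1 + \<gamma>\<^sup>2 \<noteq> 0"
    by (smt (verit) zero_le_power2)
  then show ?thesis
    using assms by (simp add: cc_def ss_def divide_simps power2_eq_square)
qed

lemma collision_eq_specular_reflection:
  assumes "r \<noteq> 0" and "\<gamma> \<noteq> 0"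
    and decomposition: "u = (u \<bullet> \<nu>) *\<^sub>R \<nu> + r *\<^sub>R (U *v \<nu>)"
  shows "collision r \<gamma> \<nu> u U = (u - (2 * (u \<bullet> \<nu>)) *\<^sub>R \<nu>, U)"
proof -
  define \<alpha> where "\<alpha> = u \<bullet> \<nu>"
  define w where "w = U *v \<nu>"
  note u = decomposition [folded \<alpha>_def w_def]
  have "cc \<gamma> *\<^sub>R u - (ss \<gamma> / \<gamma> * \<alpha>) *\<^sub>R \<nu> + (ss \<gamma> * \<gamma> * r) *\<^sub>R w
        = ((cc \<gamma> - ss \<gamma> / \<gamma>) * \<alpha>) *\<^sub>R \<nu> + ((cc \<gamma> + ss \<gamma> * \<gamma>) * r) *\<^sub>R w"
    unfolding u by (simp add: scaleR_add_right scaleR_add_left scaleR_diff_left left_diff_distrib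
        distrib_right)
  also have "\<dots> = r *\<^sub>R w - \<alpha> *\<^sub>R \<nu>"
    by (simp add: cc_minus_ss_divide [OF assms(2)] cc_plus_ss_mult)
  also have "\<dots> = u - (2 * \<alpha>) *\<^sub>R \<nu>"
    unfolding u mult_2 scaleR_add_left by simp
  finally have velocity: "cc \<gamma> *\<^sub>R u - (ss \<gamma> / \<gamma> * \<alpha>) *\<^sub>R \<nu> + (ss \<gamma> * \<gamma> * r) *\<^sub>R w
      = u - (2 * \<alpha>) *\<^sub>R \<nu>" .
  have "wedge \<nu> u = r *\<^sub>R wedge \<nu> w"
    unfolding u by (simp add: wedge_add_right wedge_scaleR_right wedge_self)
  then have spin: "(ss \<gamma> / (\<gamma> * r)) *\<^sub>R wedge \<nu> u = (ss \<gamma> / \<gamma>) *\<^sub>R wedge \<nu> w"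
    using assms(1) by simp
  show ?thesis
    unfolding collision_def \<alpha>_def [symmetric] w_def [symmetric] velocity spin by simp
qed

theorem proposition6p1:
  fixes B :: "(real^'n) set" and a :: "real^'n" and nu :: "real^'n \<Rightarrow> real^'n"
    and r \<gamma> :: real and u :: "real^'n" and U :: "real^'n^'n"
  assumes "r > 0" and "\<gamma> > 0"
    and "a \<in> frontier B" and "norm (nu a) = 1"
    and "skew U"
    and "rolling_impact r (nu a) u U"
  shows "collision r \<gamma> (nu a) u U = (u - (2 * (u \<bullet> nu a)) *\<^sub>R nu a, U)"
proof (rule collision_eq_specular_reflection)
  show "r \<noteq> 0" "\<gamma> \<noteq> 0"
    using assms(1,2) by simp_all
  show "u = (u \<bullet> nu a) *\<^sub>R nu a + r *\<^sub>R (U *v nu a)"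
    using rolling_impact_decomposition assms(4-6) .
qed

end
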